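(* Let $(P,h)$ be a poset endowed with a height function $h$, and let $H$ be the maximal value of $h$. The generating series $\mathscr{Z}_{P,h} = \sum_{n \geq 0} \mathsf{Z}_{P,h}([n+1]_q)\, t^n$ can be expressed as a rational fraction: \begin{equation} \mathscr{Z}_{P,h} = \frac{\mathcal{H}_{P,h}(q,t)}{(1- t)(1-q t)\dots(1-q^{H} t)}, \end{equation} where $\mathcal{H}_{P,h}$ is a polynomial in $q, q^{-1}$ and $t$ with integer coefficients. The degree of $\mathcal{H}_{P,h}$ with respect to $t$ is at most $H$.
   Context: $P$ is a finite poset and $h : P \to \mathbb{N}$ is a height function, i.e. $h(x) < h(y)$ for every cover relation $x < y$ in $P$. We write $[n]_q = (q^n-1)/(q-1)$. The $q$-Zeta polynomial $\mathsf{Z}_{P,h}(x) \in \mathbb{Q}(q)[x]$ is the unique polynomial such that for every integer $n \geq 2$, $\mathsf{Z}_{P,h}([n]_q) = \sum_{e_1 \leq \dots \leq e_{n-1}} q^{\sum_j h(e_j)}$, the sum running over all (weak) multichains $e_1 \leq \dots \leq e_{n-1}$ of elements of $P$; its degree is $H$, and its value at $[1]_q=1$ is the Euler characteristic of the order complex of $P$. The polynomial $\mathcal{H}_{P,h}$ is defined as the numerator appearing in this statement. *)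

theory Defs
  imports "HOL-Computational_Algebra.Computational_Algebra"
begin

definition qq :: "rat poly fract" where
  "qq = Fract [:0, 1:] 1"

definition qint :: "nat \<Rightarrow> rat poly fract" where
  "qint n = (qq ^ n - 1) / (qq - 1)"

definition is_height :: "'a::order set \<Rightarrow> ('a \<Rightarrow> nat) \<Rightarrow> bool" where
  "is_height P h \<longleftrightarrow>
     (\<forall>x\<in>P. \<forall>y\<in>P. x < y \<and> \<not> (\<exists>z\<in>P. x < z \<and> z < y) \<longrightarrow> h x < h y)"

definition multichains :: "'a::order set \<Rightarrow> nat \<Rightarrow> 'a list set" where
  "multichains P m = {xs. length xs = m \<and> set xs \<subseteq> P \<and> sorted_wrt (\<le>) xs}"

definition qZeta :: "'a::order set \<Rightarrow> ('a \<Rightarrow> nat) \<Rightarrow> rat poly fract poly" where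
  "qZeta P h = (THE p. \<forall>n\<ge>2. poly p (qint n) =
       (\<Sum>xs\<in>multichains P (n - 1). qq ^ sum_list (map h xs)))"

definition qZeta_series :: "'a::order set \<Rightarrow> ('a \<Rightarrow> nat) \<Rightarrow> rat poly fract fps" where
  "qZeta_series P h = Abs_fps (\<lambda>n. poly (qZeta P h) (qint (n + 1)))"

text \<open>Polynomial in q, q^{-1}, t with integer coefficients, given by its
  coefficient function c k j = coefficient of t^k q^j, viewed as a power series in t.\<close>
definition laurent_series :: "(nat \<Rightarrow> int \<Rightarrow> int) \<Rightarrow> rat poly fract fps" where
  "laurent_series c = Abs_fps (\<lambda>k. \<Sum>j\<in>{j. c k j \<noteq> 0}. of_int (c k j) * qq powi j)"

end

theory Submission
  imports Defs
begin

text \<open>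
  Since [n+1]_q is affine in q^n, the values at [n+1]_q of a polynomial of degree at most H are
  a combination of the geometric series in q^j t for j \<le> H, so multiplying their generating
  series by (1 - t)(1 - q t)...(1 - q^H t) leaves a polynomial in t of degree at most H.

  That the q-Zeta polynomial has degree at most H comes from the multichain series. If T_x is
  the generating series of the multichains with least element x, then
  (1 - q^(h x) t) T_x = q^(h x) t (1 + sum of T_y over y > x), and because heights increase
  strictly along chains, the product above times the multichain series has degree at most H + 1
  in t. Hence the interpolating polynomial of degree at most H through the values at
  [2]_q, ..., [H+2]_q reproduces all values, and it is the q-Zeta polynomial.

  For integrality, the coefficients of the multichain series and of the product lie in Z[q],
  and the vanishing coefficient of t^(H+1) expresses the constant term Z(1) as an element of Z[q]
  divided by the unit +-q^(0 + ... + H).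
\<close>

lemma interpolating_poly_exists:
  fixes x y :: "nat \<Rightarrow> 'a::field"
  assumes "inj_on x {..n}"
  shows "\<exists>p. degree p \<le> n \<and> (\<forall>i\<le>n. poly p (x i) = y i)"
  using assms
proof (induction n)
  case 0
  show ?case by (intro exI[of _ "[:y 0:]"]) auto
next
  case (Suc n)
  then obtain p where p: "degree p \<le> n" "\<forall>i\<le>n. poly p (x i) = y i"
    using inj_on_subset[OF Suc.prems, of "{..n}"] by auto
  define w where "w = (\<Prod>i\<le>n. [:- x i, 1:])"
  have degree_w: "degree w \<le> Suc n"
    using degree_prod_sum_le[of "{..n}" "\<lambda>i. [:- x i, 1:]"] by (simp add: w_def)
  have w_vanishes: "poly w (x i) = 0" if "i \<le> n" for i
    unfolding w_def poly_prod using that by (auto intro!: prod_zero)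
  have "x (Suc n) \<noteq> x i" if "i \<le> n" for i
    using Suc.prems that unfolding inj_on_def by (metis atMost_iff le_Suc_eq Suc_n_not_le_n)
  then have w_nonzero: "poly w (x (Suc n)) \<noteq> 0"
    unfolding w_def poly_prod by auto
  define c where "c = (y (Suc n) - poly p (x (Suc n))) / poly w (x (Suc n))"
  show ?case
  proof (intro exI[of _ "p + smult c w"] conjI allI impI)
    show "degree (p + smult c w) \<le> Suc n"
      using p degree_w degree_smult_le[of c w] by (intro degree_add_le) auto
    show "poly (p + smult c w) (x i) = y i" if "i \<le> Suc n" for i
      using that w_vanishes w_nonzero p by (cases "i = Suc n") (auto simp: c_def)
  qed
qed

lemma poly_eq_sum_upto:
  fixes p :: "'a::comm_semiring_1 poly"
  assumes "degree p \<le> n"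
  shows "poly p x = (\<Sum>i\<le>n. coeff p i * x ^ i)"
  unfolding poly_altdef
  by (rule sum.mono_neutral_left) (use assms in \<open>auto simp: coeff_eq_0\<close>)

section \<open>The indeterminate q\<close>

lemma qq_power: "qq ^ n = Fract (monom 1 n) 1"
proof (induction n)
  case 0
  show ?case by (simp add: One_fract_def)
next
  case (Suc n)
  have "qq ^ Suc n = Fract [:0, 1:] 1 * Fract (monom 1 n) 1"
    by (simp only: power_Suc Suc) (simp add: qq_def)
  also have "\<dots> = Fract (monom 1 (Suc n)) 1"
    by (simp add: mult_fract monom_Suc)
  finally show ?case .
qed

lemma qq_power_eq_iff: "qq ^ a = qq ^ b \<longleftrightarrow> a = b"
  by (auto simp: qq_power eq_fract) (metis degree_monom_eq one_neq_zero)

lemma qq_nonzero [simp]: "qq \<noteq> 0"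
  using qq_power[of 1] by (simp add: qq_def eq_fract Zero_fract_def)

lemma qq_neq_1 [simp]: "qq \<noteq> 1"
  using qq_power_eq_iff[of 1 0] by simp

lemma qint_eq_iff: "qint a = qint b \<longleftrightarrow> a = b"
  by (simp add: qint_def divide_cancel_right qq_power_eq_iff)

lemma qint_Suc_0 [simp]: "qint (Suc 0) = 1"
  by (simp add: qint_def)

lemma qint_Suc: "qint (Suc m) = - 1 / (qq - 1) + qq / (qq - 1) * qq ^ m"
  by (simp add: qint_def diff_divide_distrib)

lemma poly_eqI_qint:
  assumes "\<And>n. n \<ge> 2 \<Longrightarrow> poly p (qint n) = poly p' (qint n)"
  shows "p = p'"
proof (rule ccontr)
  assume "p \<noteq> p'"
  then have "finite {x. poly (p - p') x = 0}"
    by (intro poly_roots_finite) simp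
  moreover have "qint ` {2..} \<subseteq> {x. poly (p - p') x = 0}"
    using assms by auto
  moreover have "inj_on qint {2..}"
    by (auto simp: inj_on_def qint_eq_iff)
  ultimately have "finite {2::nat..}"
    by (metis finite_imageD finite_subset)
  then show False
    by (simp add: infinite_Ici)
qed

section \<open>Power series of bounded degree\<close>

definition fps_deg_le :: "'a::zero fps \<Rightarrow> nat \<Rightarrow> bool" where
  "fps_deg_le f d \<longleftrightarrow> (\<forall>n>d. f $ n = 0)"

lemma fps_deg_le_mono: "fps_deg_le f a \<Longrightarrow> a \<le> b \<Longrightarrow> fps_deg_le f b"
  by (simp add: fps_deg_le_def)

lemma fps_deg_le_add:
  fixes f g :: "'a::monoid_add fps"
  shows "fps_deg_le f d \<Longrightarrow> fps_deg_le g d \<Longrightarrow> fps_deg_le (f + g) d"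
  by (simp add: fps_deg_le_def)

lemma fps_deg_le_diff:
  fixes f g :: "'a::group_add fps"
  shows "fps_deg_le f d \<Longrightarrow> fps_deg_le g d \<Longrightarrow> fps_deg_le (f - g) d"
  by (simp add: fps_deg_le_def)

lemma fps_deg_le_sum:
  fixes f :: "'b \<Rightarrow> 'a::comm_monoid_add fps"
  shows "(\<And>x. x \<in> S \<Longrightarrow> fps_deg_le (f x) d) \<Longrightarrow> fps_deg_le (sum f S) d"
  by (simp add: fps_deg_le_def fps_sum_nth)

lemma fps_deg_le_const: "fps_deg_le (fps_const c) 0"
  by (simp add: fps_deg_le_def)

lemma fps_deg_le_X: "fps_deg_le fps_X 1"
  by (simp add: fps_deg_le_def fps_X_def)

lemma fps_deg_le_mult:
  fixes f g :: "'a::comm_semiring_0 fps"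
  assumes "fps_deg_le f a" "fps_deg_le g b"
  shows "fps_deg_le (f * g) (a + b)"
  unfolding fps_deg_le_def
proof (intro allI impI)
  fix n assume n: "n > a + b"
  have "f $ i * g $ (n - i) = 0" for i
    using assms n by (cases "i > a") (auto simp: fps_deg_le_def)
  then show "(f * g) $ n = 0"
    by (simp add: fps_mult_nth)
qed

lemma fps_eq_of_mult_deg_le:
  fixes A B D :: "'a::idom fps"
  assumes "D \<noteq> 0" "fps_deg_le (D * A) d" "fps_deg_le (D * B) d"
    and "\<And>n. n \<le> d \<Longrightarrow> A $ n = B $ n"
  shows "A = B"
proof -
  have "(D * (A - B)) $ n = 0" for n
  proof (cases "n \<le> d")
    case True
    then show ?thesis
      using assms(4) by (auto simp: fps_mult_nth intro!: sum.neutral)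
  next
    case False
    have "fps_deg_le (D * A - D * B) d"
      using assms(2,3) by (rule fps_deg_le_diff)
    with False show ?thesis
      by (simp add: fps_deg_le_def right_diff_distrib)
  qed
  then have "D * (A - B) = 0"
    by (intro fps_ext) simp
  with assms(1) show ?thesis
    by simp
qed

lemma fps_linear_factor_mult_nth:
  fixes c :: "'a::comm_ring_1"
  shows "((1 - fps_const c * fps_X) * f) $ n = f $ n - (if n = 0 then 0 else c * f $ (n - 1))"
proof -
  have "(1 - fps_const c * fps_X) * f = f - fps_const c * (fps_X * f)"
    by (simp add: left_diff_distrib mult.assoc)
  then show ?thesis
    by simp
qed

lemma fps_linear_factor_mult_geometric:
  fixes a :: "'a::comm_ring_1"
  shows "(1 - fps_const a * fps_X) * Abs_fps (\<lambda>n. a ^ n) = 1"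
  by (rule fps_ext) (auto simp: fps_linear_factor_mult_nth power_eq_if)

definition qfactors :: "nat set \<Rightarrow> rat poly fract fps" where
  "qfactors S = (\<Prod>i\<in>S. 1 - fps_const (qq ^ i) * fps_X)"

lemma qfactors_insert:
  "finite S \<Longrightarrow> i \<notin> S \<Longrightarrow> qfactors (insert i S) = (1 - fps_const (qq ^ i) * fps_X) * qfactors S"
  by (simp add: qfactors_def)

lemma qfactors_remove:
  "finite S \<Longrightarrow> i \<in> S \<Longrightarrow> qfactors S = (1 - fps_const (qq ^ i) * fps_X) * qfactors (S - {i})"
  by (simp add: qfactors_def prod.remove)

lemma fps_deg_le_qfactors: "finite S \<Longrightarrow> fps_deg_le (qfactors S) (card S)"
proof (induction S rule: finite_induct)
  case empty
  show ?case by (simp add: qfactors_def fps_deg_le_def)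
next
  case (insert i S)
  have "fps_deg_le (1 - fps_const (qq ^ i) * fps_X) 1"
    by (simp add: fps_deg_le_def fps_X_def)
  from fps_deg_le_mult[OF this insert.IH] show ?case
    using insert.hyps by (simp add: qfactors_insert)
qed

lemma qfactors_nth_0: "finite S \<Longrightarrow> qfactors S $ 0 = 1"
  by (induction S rule: finite_induct) (simp_all add: qfactors_def fps_linear_factor_mult_nth)

lemma qfactors_nonzero: "finite S \<Longrightarrow> qfactors S \<noteq> 0"
  using qfactors_nth_0 by force

lemma qfactors_nth_card: "finite S \<Longrightarrow> qfactors S $ card S = (- 1) ^ card S * qq ^ \<Sum>S"
proof (induction S rule: finite_induct)
  case empty
  show ?case by (simp add: qfactors_def)
next
  case (insert i S)
  have "qfactors S $ Suc (card S) = 0"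
    using fps_deg_le_qfactors[OF insert.hyps(1)] by (simp add: fps_deg_le_def)
  with insert show ?case
    by (simp add: qfactors_insert fps_linear_factor_mult_nth power_add)
qed

lemma fps_deg_le_qfactors_mult_poly_qint:
  assumes "degree p \<le> H"
  shows "fps_deg_le (qfactors {0..H} * Abs_fps (\<lambda>n. poly p (qint (n + 1)))) H"
proof -
  define r where "r = pcompose p [:- 1 / (qq - 1), qq / (qq - 1):]"
  have degree_r: "degree r \<le> H"
    using degree_pcompose_le[of p "[:- 1 / (qq - 1), qq / (qq - 1):]"] assms
    unfolding r_def by (simp add: order_trans)
  have series_eq: "Abs_fps (\<lambda>n. poly p (qint (n + 1)))
      = (\<Sum>j\<le>H. fps_const (coeff r j) * Abs_fps (\<lambda>n. (qq ^ j) ^ n))"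
  proof (rule fps_ext)
    fix n
    have "poly p (qint (n + 1)) = poly r (qq ^ n)"
      by (simp add: r_def poly_pcompose qint_Suc algebra_simps)
    also have "\<dots> = (\<Sum>j\<le>H. coeff r j * (qq ^ n) ^ j)"
      by (rule poly_eq_sum_upto[OF degree_r])
    finally show "Abs_fps (\<lambda>n. poly p (qint (n + 1))) $ n
        = (\<Sum>j\<le>H. fps_const (coeff r j) * Abs_fps (\<lambda>n. (qq ^ j) ^ n)) $ n"
      by (simp add: fps_sum_nth power_mult[symmetric] mult.commute)
  qed
  have "fps_deg_le (qfactors {0..H} * Abs_fps (\<lambda>n. (qq ^ j) ^ n)) H" if "j \<le> H" for j
  proof -
    have "qfactors {0..H} * Abs_fps (\<lambda>n. (qq ^ j) ^ n)
        = qfactors ({0..H} - {j}) * ((1 - fps_const (qq ^ j) * fps_X) * Abs_fps (\<lambda>n. (qq ^ j) ^ n))"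
      using that by (subst qfactors_remove[of _ j]) (simp_all add: mult_ac)
    also have "\<dots> = qfactors ({0..H} - {j})"
      by (simp add: fps_linear_factor_mult_geometric)
    finally have "qfactors {0..H} * Abs_fps (\<lambda>n. (qq ^ j) ^ n) = qfactors ({0..H} - {j})" .
    with fps_deg_le_qfactors[of "{0..H} - {j}"] that show ?thesis
      by (auto elim: fps_deg_le_mono)
  qed
  then show ?thesis
    unfolding series_eq sum_distrib_left
    by (auto intro!: fps_deg_le_sum fps_deg_le_mult[OF fps_deg_le_const, simplified] simp: mult_ac)
qed

section \<open>Multichains\<close>

lemma is_height_less:
  assumes "finite P" "is_height P h" "x \<in> P" "z \<in> P" "x < z"
  shows "h x < h z"
  using assms(3-5)
proof (induction "card {w\<in>P. x < w \<and> w < z}" arbitrary: x z rule: less_induct)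
  case less
  show ?case
  proof (cases "\<exists>w\<in>P. x < w \<and> w < z")
    case False
    then show ?thesis
      using assms(2) less.prems unfolding is_height_def by blast
  next
    case True
    then obtain w where w: "w \<in> P" "x < w" "w < z" by blast
    have "card {v\<in>P. x < v \<and> v < w} < card {v\<in>P. x < v \<and> v < z}"
      by (rule psubset_card_mono) (use assms(1) w in \<open>auto dest: less_trans\<close>)
    moreover have "card {v\<in>P. w < v \<and> v < z} < card {v\<in>P. x < v \<and> v < z}"
      by (rule psubset_card_mono) (use assms(1) w in \<open>auto dest: less_trans\<close>)
    ultimately have "h x < h w" "h w < h z"
      using less w by blast+
    then show ?thesis
      by simp
  qed
qed

lemma multichains_0 [simp]: "multichains A 0 = {[]}"
  by (auto simp: multichains_def)

lemma multichains_Suc: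
  "multichains A (Suc m) = (\<lambda>(y, ys). y # ys) ` (SIGMA y:A. multichains {z\<in>A. y \<le> z} m)"
proof (rule set_eqI)
  fix xs
  show "xs \<in> multichains A (Suc m) \<longleftrightarrow>
        xs \<in> (\<lambda>(y, ys). y # ys) ` (SIGMA y:A. multichains {z\<in>A. y \<le> z} m)"
  proof
    assume "xs \<in> multichains A (Suc m)"
    then obtain y ys where "xs = y # ys" "length ys = m" "y \<in> A" "set ys \<subseteq> A"
      "\<forall>z\<in>set ys. y \<le> z" "sorted_wrt (\<le>) ys"
      by (auto simp: multichains_def length_Suc_conv)
    then show "xs \<in> (\<lambda>(y, ys). y # ys) ` (SIGMA y:A. multichains {z\<in>A. y \<le> z} m)"
      by (intro rev_image_eqI[of "(y, ys)"]) (auto simp: multichains_def)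
  qed (auto simp: multichains_def)
qed

lemma finite_multichains: "finite A \<Longrightarrow> finite (multichains A m)"
  by (rule finite_subset[OF _ finite_lists_length_eq[of A m]]) (auto simp: multichains_def)

definition multichain_weight :: "('a::order \<Rightarrow> nat) \<Rightarrow> 'a set \<Rightarrow> nat \<Rightarrow> rat poly fract" where
  "multichain_weight h A m = (\<Sum>xs\<in>multichains A m. qq ^ sum_list (map h xs))"

lemma multichain_weight_0 [simp]: "multichain_weight h A 0 = 1"
  by (simp add: multichain_weight_def)

lemma multichain_weight_Suc:
  assumes "finite A"
  shows "multichain_weight h A (Suc m) = (\<Sum>y\<in>A. qq ^ h y * multichain_weight h {z\<in>A. y \<le> z} m)"
proof -
  have "inj_on (\<lambda>(y, ys). y # ys) (SIGMA y:A. multichains {z\<in>A. y \<le> z} m)"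
    by (auto simp: inj_on_def)
  then have "multichain_weight h A (Suc m)
      = (\<Sum>(y, ys)\<in>(SIGMA y:A. multichains {z\<in>A. y \<le> z} m). qq ^ sum_list (map h (y # ys)))"
    unfolding multichain_weight_def multichains_Suc by (simp add: sum.reindex case_prod_unfold)
  also have "\<dots> = (\<Sum>y\<in>A. \<Sum>ys\<in>multichains {z\<in>A. y \<le> z} m. qq ^ sum_list (map h (y # ys)))"
    by (rule sum.Sigma[symmetric]) (use assms in \<open>auto intro: finite_multichains\<close>)
  also have "\<dots> = (\<Sum>y\<in>A. qq ^ h y * multichain_weight h {z\<in>A. y \<le> z} m)"
    by (simp add: multichain_weight_def power_add sum_distrib_left)
  finally show ?thesis .
qed

section \<open>The q-Zeta polynomial through the multichain series\<close>

lemma qZeta_eqI: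
  assumes "\<And>n. n \<ge> 2 \<Longrightarrow> poly p (qint n) = multichain_weight h P (n - 1)"
  shows "qZeta P h = p"
  unfolding qZeta_def
proof (rule the_equality)
  show "\<forall>n\<ge>2. poly p (qint n) = (\<Sum>xs\<in>multichains P (n - 1). qq ^ sum_list (map h xs))"
    using assms by (simp add: multichain_weight_def)
  show "p' = p" if "\<forall>n\<ge>2. poly p' (qint n) = (\<Sum>xs\<in>multichains P (n - 1). qq ^ sum_list (map h xs))"
    for p'
    using that assms by (intro poly_eqI_qint) (simp add: multichain_weight_def)
qed

locale height_poset =
  fixes P :: "'a::order set" and h :: "'a \<Rightarrow> nat"
  assumes finite_P: "finite P" and height: "is_height P h"
begin

abbreviation max_height :: nat where
  "max_height \<equiv> Max (h ` P)"

definition chain_series :: "rat poly fract fps" where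
  "chain_series = Abs_fps (\<lambda>n. if n = 0 then 0 else multichain_weight h P n)"

definition chain_series_from :: "'a \<Rightarrow> rat poly fract fps" where
  "chain_series_from x =
     Abs_fps (\<lambda>n. if n = 0 then 0 else qq ^ h x * multichain_weight h {y\<in>P. x \<le> y} (n - 1))"

lemma multichain_weight_above_Suc:
  "multichain_weight h {y\<in>P. x \<le> y} (Suc m)
     = (\<Sum>y\<in>{y\<in>P. x \<le> y}. qq ^ h y * multichain_weight h {z\<in>P. y \<le> z} m)"
proof -
  have "multichain_weight h {y\<in>P. x \<le> y} (Suc m)
      = (\<Sum>y\<in>{y\<in>P. x \<le> y}. qq ^ h y * multichain_weight h {z\<in>{y\<in>P. x \<le> y}. y \<le> z} m)"
    by (rule multichain_weight_Suc) (use finite_P in auto)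
  also have "\<dots> = (\<Sum>y\<in>{y\<in>P. x \<le> y}. qq ^ h y * multichain_weight h {z\<in>P. y \<le> z} m)"
    by (rule sum.cong) (auto intro!: arg_cong[where f = "\<lambda>A. multichain_weight h A m"] dest: order_trans)
  finally show ?thesis .
qed

lemma chain_series_eq_sum: "chain_series = (\<Sum>x\<in>P. chain_series_from x)"
proof (rule fps_ext)
  fix n
  show "chain_series $ n = (\<Sum>x\<in>P. chain_series_from x) $ n"
    by (cases n) (simp_all add: chain_series_def chain_series_from_def fps_sum_nth
        multichain_weight_Suc finite_P)
qed

lemma chain_series_from_recurrence:
  assumes "x \<in> P"
  shows "(1 - fps_const (qq ^ h x) * fps_X) * chain_series_from x =
     fps_const (qq ^ h x) * (fps_X * (1 + (\<Sum>y\<in>{y\<in>P. x < y}. chain_series_from y)))"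
proof (rule fps_ext)
  fix n
  have split_above: "(\<Sum>y\<in>{y\<in>P. x \<le> y}. g y) = g x + (\<Sum>y\<in>{y\<in>P. x < y}. g y)"
    for g :: "'a \<Rightarrow> rat poly fract"
  proof -
    have "{y\<in>P. x \<le> y} = insert x {y\<in>P. x < y}"
      using assms by auto
    then show ?thesis
      by (simp add: finite_P)
  qed
  consider "n = 0" | "n = 1" | k where "n = Suc (Suc k)"
    by (metis One_nat_def not0_implies_Suc)
  then show "((1 - fps_const (qq ^ h x) * fps_X) * chain_series_from x) $ n =
     (fps_const (qq ^ h x) * (fps_X * (1 + (\<Sum>y\<in>{y\<in>P. x < y}. chain_series_from y)))) $ n"
  proof cases
    case (3 k)
    then show ?thesis
      by (simp add: fps_linear_factor_mult_nth chain_series_from_def fps_sum_nth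
          multichain_weight_above_Suc split_above algebra_simps)
  qed (simp_all add: fps_linear_factor_mult_nth chain_series_from_def fps_sum_nth)
qed

lemma fps_deg_le_qfactors_mult_chain_series_from:
  "x \<in> P \<Longrightarrow> finite S \<Longrightarrow> h ` {y\<in>P. x \<le> y} \<subseteq> S \<Longrightarrow>
     fps_deg_le (qfactors S * chain_series_from x) (card S)"
proof (induction "card {y\<in>P. x < y}" arbitrary: x S rule: less_induct)
  case less
  define c where "c = qq ^ h x"
  define S' where "S' = S - {h x}"
  have hx: "h x \<in> S"
    using less.prems by auto
  have card_S: "card S = Suc (card S')"
    using card_Suc_Diff1[OF less.prems(2) hx] by (simp add: S'_def)
  have "qfactors S * chain_series_from x
      = qfactors S' * ((1 - fps_const c * fps_X) * chain_series_from x)"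
    using qfactors_remove[OF less.prems(2) hx] by (simp add: S'_def c_def mult_ac)
  also have "\<dots> = (fps_const c * fps_X) *
      (qfactors S' + (\<Sum>y\<in>{y\<in>P. x < y}. qfactors S' * chain_series_from y))"
    unfolding c_def chain_series_from_recurrence[OF less.prems(1)]
    by (simp add: algebra_simps sum_distrib_left)
  finally have eq: "qfactors S * chain_series_from x = (fps_const c * fps_X) *
      (qfactors S' + (\<Sum>y\<in>{y\<in>P. x < y}. qfactors S' * chain_series_from y))" .
  have "fps_deg_le (qfactors S' * chain_series_from y) (card S')" if y: "y \<in> P" "x < y" for y
  proof -
    have "card {z\<in>P. y < z} < card {z\<in>P. x < z}"
      by (rule psubset_card_mono) (use finite_P y in \<open>auto dest: less_trans\<close>)
    moreover have "h ` {z\<in>P. y \<le> z} \<subseteq> S'"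
    proof (intro subsetI, elim imageE CollectE conjE)
      fix a z assume "a = h z" "z \<in> P" "y \<le> z"
      have "x < z"
        using y \<open>y \<le> z\<close> by (auto dest: less_le_trans)
      then show "a \<in> S'"
        using is_height_less[OF finite_P height less.prems(1) \<open>z \<in> P\<close>] less.prems(3)
          \<open>a = h z\<close> \<open>z \<in> P\<close> by (auto simp: S'_def)
    qed
    ultimately show ?thesis
      using less.hyps[of y S'] y less.prems(2) by (auto simp: S'_def)
  qed
  then have "fps_deg_le (qfactors S' + (\<Sum>y\<in>{y\<in>P. x < y}. qfactors S' * chain_series_from y))
      (card S')"
    using fps_deg_le_qfactors[of S'] less.prems(2)
    by (intro fps_deg_le_add fps_deg_le_sum) (auto simp: S'_def)
  from fps_deg_le_mult[OF fps_deg_le_mult[OF fps_deg_le_const fps_deg_le_X] this]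
  show ?case
    using eq card_S by simp
qed

lemma fps_deg_le_qfactors_mult_chain_series:
  "fps_deg_le (qfactors {0..max_height} * chain_series) (Suc max_height)"
proof -
  have "fps_deg_le (qfactors {0..max_height} * chain_series_from x) (card {0..max_height})"
    if "x \<in> P" for x
    using that finite_P by (intro fps_deg_le_qfactors_mult_chain_series_from) auto
  then show ?thesis
    by (auto simp: chain_series_eq_sum sum_distrib_left intro: fps_deg_le_sum)
qed

lemma interpolant_series_eq:
  assumes "degree p \<le> max_height"
    and "\<And>i. i \<le> max_height \<Longrightarrow> poly p (qint (i + 2)) = multichain_weight h P (i + 1)"
  shows "Abs_fps (\<lambda>n. poly p (qint (n + 1))) = fps_const (poly p 1) + chain_series"
proof (rule fps_eq_of_mult_deg_le)
  show "qfactors {0..max_height} \<noteq> 0"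
    by (simp add: qfactors_nonzero)
  show "fps_deg_le (qfactors {0..max_height} * Abs_fps (\<lambda>n. poly p (qint (n + 1)))) (Suc max_height)"
    using fps_deg_le_qfactors_mult_poly_qint[OF assms(1)] by (rule fps_deg_le_mono) simp
  have "fps_deg_le (fps_const (poly p 1) * qfactors {0..max_height}) (Suc max_height)"
    using fps_deg_le_mult[OF fps_deg_le_const fps_deg_le_qfactors[of "{0..max_height}"]] by simp
  then show "fps_deg_le (qfactors {0..max_height} * (fps_const (poly p 1) + chain_series))
      (Suc max_height)"
    using fps_deg_le_qfactors_mult_chain_series
    by (simp add: distrib_left mult.commute fps_deg_le_add)
  show "Abs_fps (\<lambda>n. poly p (qint (n + 1))) $ n = (fps_const (poly p 1) + chain_series) $ n"
    if "n \<le> Suc max_height" for n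
    using that assms(2)[of "n - 1"] by (cases n) (simp_all add: chain_series_def)
qed

lemma qZeta_eq_interpolant:
  assumes "degree p \<le> max_height"
    and "\<And>i. i \<le> max_height \<Longrightarrow> poly p (qint (i + 2)) = multichain_weight h P (i + 1)"
  shows "qZeta P h = p"
proof (rule qZeta_eqI)
  fix n :: nat assume "n \<ge> 2"
  with arg_cong[OF interpolant_series_eq[OF assms], of "\<lambda>F. F $ (n - 1)"]
  show "poly p (qint n) = multichain_weight h P (n - 1)"
    by (simp add: chain_series_def)
qed

lemma degree_qZeta_le_and_qZeta_series_eq:
  "degree (qZeta P h) \<le> max_height \<and>
   qZeta_series P h = fps_const (poly (qZeta P h) 1) + chain_series"
proof -
  have "inj_on (\<lambda>i. qint (i + 2)) {..max_height}"
    by (auto simp: inj_on_def qint_eq_iff)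
  then obtain p where p: "degree p \<le> max_height"
    "\<And>i. i \<le> max_height \<Longrightarrow> poly p (qint (i + 2)) = multichain_weight h P (i + 1)"
    using interpolating_poly_exists[of "\<lambda>i. qint (i + 2)" max_height "\<lambda>i. multichain_weight h P (i + 1)"]
    by blast
  then show ?thesis
    using qZeta_eq_interpolant[OF p] interpolant_series_eq[OF p] by (simp add: qZeta_series_def)
qed

end

section \<open>Integrality\<close>

lemma map_poly_of_int_add:
  "map_poly (of_int :: int \<Rightarrow> 'a::comm_ring_1) (p + q) = map_poly of_int p + map_poly of_int q"
  by (rule poly_eqI) (simp add: coeff_map_poly)

lemma map_poly_of_int_uminus:
  "map_poly (of_int :: int \<Rightarrow> 'a::comm_ring_1) (- p) = - map_poly of_int p"
  by (rule poly_eqI) (simp add: coeff_map_poly)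

lemma map_poly_of_int_mult:
  "map_poly (of_int :: int \<Rightarrow> 'a::comm_ring_1) (p * q) = map_poly of_int p * map_poly of_int q"
  by (rule poly_eqI) (simp add: coeff_map_poly coeff_mult)

definition eval_qq :: "int poly \<Rightarrow> rat poly fract" where
  "eval_qq r = poly (map_poly of_int r) qq"

lemma eval_qq_add: "eval_qq (p + q) = eval_qq p + eval_qq q"
  by (simp add: eval_qq_def map_poly_of_int_add)

lemma eval_qq_mult: "eval_qq (p * q) = eval_qq p * eval_qq q"
  by (simp add: eval_qq_def map_poly_of_int_mult)

lemma eval_qq_uminus: "eval_qq (- p) = - eval_qq p"
  by (simp add: eval_qq_def map_poly_of_int_uminus)

definition int_qpolys :: "rat poly fract set" where
  "int_qpolys = range eval_qq"

lemma int_qpolys_add: "a \<in> int_qpolys \<Longrightarrow> b \<in> int_qpolys \<Longrightarrow> a + b \<in> int_qpolys"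
  by (auto simp: int_qpolys_def eval_qq_add[symmetric])

lemma int_qpolys_mult: "a \<in> int_qpolys \<Longrightarrow> b \<in> int_qpolys \<Longrightarrow> a * b \<in> int_qpolys"
  by (auto simp: int_qpolys_def eval_qq_mult[symmetric])

lemma int_qpolys_uminus: "a \<in> int_qpolys \<Longrightarrow> - a \<in> int_qpolys"
  by (auto simp: int_qpolys_def eval_qq_uminus[symmetric])

lemma int_qpolys_diff: "a \<in> int_qpolys \<Longrightarrow> b \<in> int_qpolys \<Longrightarrow> a - b \<in> int_qpolys"
  using int_qpolys_add[OF _ int_qpolys_uminus] by (metis diff_conv_add_uminus)

lemma int_qpolys_of_int: "of_int k \<in> int_qpolys"
  unfolding int_qpolys_def
  by (rule image_eqI[of _ _ "[:k:]"]) (auto simp: eval_qq_def map_poly_pCons)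

lemma int_qpolys_0: "0 \<in> int_qpolys"
  using int_qpolys_of_int[of 0] by simp

lemma int_qpolys_1: "1 \<in> int_qpolys"
  using int_qpolys_of_int[of 1] by simp

lemma int_qpolys_qq: "qq \<in> int_qpolys"
  unfolding int_qpolys_def
  by (rule image_eqI[of _ _ "[:0, 1:]"]) (auto simp: eval_qq_def map_poly_pCons)

lemma int_qpolys_power: "a \<in> int_qpolys \<Longrightarrow> a ^ n \<in> int_qpolys"
  by (induction n) (auto intro: int_qpolys_mult int_qpolys_1)

lemma int_qpolys_sum: "(\<And>x. x \<in> S \<Longrightarrow> f x \<in> int_qpolys) \<Longrightarrow> sum f S \<in> int_qpolys"
  by (induction S rule: infinite_finite_induct) (auto intro: int_qpolys_add int_qpolys_0)

lemma fps_mult_nth_int_qpolys: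
  "(\<And>i. f $ i \<in> int_qpolys) \<Longrightarrow> (\<And>i. g $ i \<in> int_qpolys) \<Longrightarrow> (f * g) $ n \<in> int_qpolys"
  unfolding fps_mult_nth by (intro int_qpolys_sum int_qpolys_mult) auto

lemma qfactors_nth_int_qpolys: "finite S \<Longrightarrow> qfactors S $ n \<in> int_qpolys"
proof (induction S arbitrary: n rule: finite_induct)
  case empty
  show ?case by (cases n) (auto simp: qfactors_def int_qpolys_0 int_qpolys_1)
next
  case (insert i S)
  then show ?case
    by (auto simp: qfactors_insert fps_linear_factor_mult_nth
        intro!: int_qpolys_diff int_qpolys_mult int_qpolys_power int_qpolys_qq int_qpolys_0)
qed

lemma multichain_weight_int_qpolys: "multichain_weight h A m \<in> int_qpolys"
  unfolding multichain_weight_def by (intro int_qpolys_sum int_qpolys_power int_qpolys_qq)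

definition int_laurent :: "rat poly fract set" where
  "int_laurent = {x. \<exists>c :: int \<Rightarrow> int. finite {j. c j \<noteq> 0} \<and>
                       x = (\<Sum>j\<in>{j. c j \<noteq> 0}. of_int (c j) * qq powi j)}"

lemma int_qpolys_divide_qq_power:
  assumes "w \<in> int_qpolys"
  shows "w / qq ^ N \<in> int_laurent"
proof -
  obtain r where r: "w = poly (map_poly of_int r) qq"
    using assms by (auto simp: int_qpolys_def eval_qq_def)
  define shift where "shift i = int i - int N" for i
  define c where "c j = (if - int N \<le> j then coeff r (nat (j + int N)) else 0)" for j
  have support: "{j. c j \<noteq> 0} \<subseteq> shift ` {..degree r}"
  proof
    fix j assume "j \<in> {j. c j \<noteq> 0}"
    then have j: "- int N \<le> j" "coeff r (nat (j + int N)) \<noteq> 0"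
      by (auto simp: c_def split: if_splits)
    then have "nat (j + int N) \<le> degree r"
      by (intro le_degree)
    moreover have "j = shift (nat (j + int N))"
      using j by (simp add: shift_def)
    ultimately show "j \<in> shift ` {..degree r}"
      by blast
  qed
  have "w = (\<Sum>i\<le>degree r. of_int (coeff r i) * qq ^ i)"
    unfolding r using map_poly_degree_leq
    by (subst poly_eq_sum_upto[of _ "degree r"]) (auto simp: coeff_map_poly)
  then have "w / qq ^ N = (\<Sum>i\<le>degree r. of_int (coeff r i) * qq powi shift i)"
    by (simp add: sum_divide_distrib shift_def power_int_diff)
  also have "\<dots> = (\<Sum>j\<in>shift ` {..degree r}. of_int (c j) * qq powi j)"
    by (subst sum.reindex) (auto simp: inj_on_def shift_def c_def)
  also have "\<dots> = (\<Sum>j\<in>{j. c j \<noteq> 0}. of_int (c j) * qq powi j)"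
    by (rule sum.mono_neutral_right) (use support in auto)
  finally show ?thesis
    using finite_subset[OF support] by (auto simp: int_laurent_def)
qed

lemma qfactors_mult_nth_int_laurent:
  assumes "finite S" "d < card S" "fps_deg_le (qfactors S * (fps_const a + M)) d"
    and "\<And>n. M $ n \<in> int_qpolys"
  shows "(qfactors S * (fps_const a + M)) $ k \<in> int_laurent"
proof -
  define z where "z n = (qfactors S * M) $ n" for n
  define s :: "rat poly fract" where "s = (- 1) ^ card S"
  define N where "N = \<Sum>S"
  have z: "z n \<in> int_qpolys" for n
    unfolding z_def using assms(1,4) by (intro fps_mult_nth_int_qpolys qfactors_nth_int_qpolys)
  have nth: "(qfactors S * (fps_const a + M)) $ n = a * qfactors S $ n + z n" for n
    by (simp add: z_def algebra_simps)
  have top: "a * (s * qq ^ N) = - z (card S)"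
    using assms(2,3) nth[of "card S"] qfactors_nth_card[OF assms(1)]
    by (simp add: fps_deg_le_def s_def N_def eq_neg_iff_add_eq_0)
  have "s * s = 1"
    by (simp add: s_def power_mult_distrib[symmetric])
  then have "a * qq ^ N = s * (a * (s * qq ^ N))"
    by (simp add: mult_ac)
  also have "\<dots> = - (s * z (card S))"
    by (simp add: top)
  finally have "a * qq ^ N = - (s * z (card S))" .
  then have a: "a = - (s * z (card S)) / qq ^ N"
    by (metis qq_nonzero power_not_zero nonzero_mult_div_cancel_right)
  have "(qfactors S * (fps_const a + M)) $ k = a * qfactors S $ k + z k"
    by (rule nth)
  also have "\<dots> = (- (s * z (card S)) * qfactors S $ k + z k * qq ^ N) / qq ^ N"
    unfolding a by (simp add: field_simps)
  finally have "(qfactors S * (fps_const a + M)) $ k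
      = (- (s * z (card S)) * qfactors S $ k + z k * qq ^ N) / qq ^ N" .
  moreover have "- (s * z (card S)) * qfactors S $ k + z k * qq ^ N \<in> int_qpolys"
    unfolding s_def
    by (intro int_qpolys_add int_qpolys_mult int_qpolys_uminus int_qpolys_power int_qpolys_qq z
        int_qpolys_of_int[of "-1", simplified] qfactors_nth_int_qpolys assms(1))
  ultimately show ?thesis
    by (simp add: int_qpolys_divide_qq_power)
qed

lemma laurent_series_exists:
  assumes "fps_deg_le F H" "\<And>k. F $ k \<in> int_laurent"
  shows "\<exists>c. finite {(k, j). c k j \<noteq> 0} \<and> (\<forall>k j. H < k \<longrightarrow> c k j = 0) \<and> F = laurent_series c"
proof -
  have "\<forall>k. \<exists>c. finite {j. c j \<noteq> 0} \<and> F $ k = (\<Sum>j\<in>{j. c j \<noteq> 0}. of_int (c j) * qq powi j)"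
    using assms(2) by (simp add: int_laurent_def)
  then obtain C where C: "\<And>k. finite {j. C k j \<noteq> 0}"
    "\<And>k. F $ k = (\<Sum>j\<in>{j. C k j \<noteq> 0}. of_int (C k j) * qq powi j)"
    unfolding choice_iff by blast
  define c where "c k j = (if k \<le> H then C k j else 0)" for k j
  have "{(k, j). c k j \<noteq> 0} \<subseteq> (SIGMA k:{..H}. {j. C k j \<noteq> 0})"
    by (auto simp: c_def split: if_splits)
  then have "finite {(k, j). c k j \<noteq> 0}"
    by (rule finite_subset) (auto intro: C(1))
  moreover have "F = laurent_series c"
  proof (rule fps_ext)
    fix k
    show "F $ k = laurent_series c $ k"
      using assms(1) by (cases "k \<le> H") (simp_all add: laurent_series_def c_def C(2) fps_deg_le_def)
  qed
  ultimately show ?thesis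
    by (intro exI[of _ c]) (simp add: c_def)
qed

lemma (in height_poset) chain_series_nth_int_qpolys: "chain_series $ n \<in> int_qpolys"
  by (simp add: chain_series_def int_qpolys_0 multichain_weight_int_qpolys)

theorem mainTheorem4:
  fixes P :: "'a::order set" and h :: "'a \<Rightarrow> nat"
  assumes "finite P" and "is_height P h"
  defines "H \<equiv> Max (h ` P)"
  shows "\<exists>c :: nat \<Rightarrow> int \<Rightarrow> int.
           finite {(k, j). c k j \<noteq> 0} \<and>
           (\<forall>k j. H < k \<longrightarrow> c k j = 0) \<and>
           qZeta_series P h * (\<Prod>i\<in>{0..H}. 1 - fps_const (qq ^ i) * fps_X)
             = laurent_series c"
proof -
  interpret height_poset P h
    using assms(1,2) by unfold_locales
  have degree: "degree (qZeta P h) \<le> H" and series: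
    "qZeta_series P h = fps_const (poly (qZeta P h) 1) + chain_series"
    using degree_qZeta_le_and_qZeta_series_eq by (simp_all add: H_def)
  let ?F = "qfactors {0..H} * qZeta_series P h"
  have "fps_deg_le ?F H"
    using fps_deg_le_qfactors_mult_poly_qint[OF degree] by (simp add: qZeta_series_def)
  moreover have "?F $ k \<in> int_laurent" for k
    using \<open>fps_deg_le ?F H\<close> unfolding series
    by (intro qfactors_mult_nth_int_laurent chain_series_nth_int_qpolys) simp_all
  ultimately show ?thesis
    using laurent_series_exists[of ?F H] by (simp add: qfactors_def mult.commute)
qed

end
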